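(* Consider the Coxeter diagram $D$ with seven nodes $1,\dots,7$ forming the cycle $6-5-4-3-2-1-7-6$, with edge labels $m_{65}=4$, $m_{54}=4$, $m_{43}=6$, $m_{32}=4$, $m_{21}=\infty$, $m_{17}=4$, $m_{76}=6$, and all other pairs of nodes non-adjacent (i.e. $m_{ij}=2$). Then $D$ is the Coxeter diagram of a finite-volume hyperbolic Coxeter $4$-polytope $P_0$ which (a) has exactly one ideal vertex, and (b) has the property that whenever a bounded facet and an unbounded facet intersect, their dihedral angle is $\pi/(2k)$ for some $k\in\mathbb{N}$. Moreover, the horospherical link of the unique ideal vertex of $P_0$ is a Euclidean right prism over a triangle with inner angles $\pi/2,\pi/4,\pi/4$, and its Coxeter diagram is the subdiagram of $D$ spanned by the nodes $1,2,4,5,6$.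
   Context: A hyperbolic Coxeter polytope is a finite convex polytope in $\mathbb{H}^n$ all of whose dihedral angles are integral submultiples of $\pi$. Its Coxeter diagram has one node per bounding hyperplane; nodes $i,j$ are joined by an edge labelled $m_{ij}$ if the hyperplanes meet at dihedral angle $\pi/m_{ij}$, with label $\infty$ if they are tangent at infinity, no edge if $m_{ij}=2$, and a dashed edge if they are ultraparallel (there are no dashed edges in $D$). *)

theory Defs
  imports "HOL-Analysis.Analysis"
begin

type_synonym lor = "(real^4) \<times> real"

definition lorentz :: "lor \<Rightarrow> lor \<Rightarrow> real" where
  "lorentz x y = fst x \<bullet> fst y - snd x * snd y"

definition hyp :: "lor set" where
  "hyp = {x. lorentz x x = -1 \<and> snd x > 0}"

definition hyp_dist :: "lor \<Rightarrow> lor \<Rightarrow> real" where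
  "hyp_dist x y = arcosh (- lorentz x y)"

definition hyp_bounded :: "lor set \<Rightarrow> bool" where
  "hyp_bounded A \<longleftrightarrow> (\<exists>x0\<in>hyp. \<exists>r. \<forall>y\<in>A. hyp_dist x0 y \<le> r)"

text \<open>Hyperbolic volume, computed in the Klein (projective) model, whose
  volume element is dy / (1 - |y|^2)^((n+1)/2) with n = 4.\<close>
definition klein :: "lor \<Rightarrow> real^4" where
  "klein x = fst x /\<^sub>R snd x"

definition hyp_volume :: "lor set \<Rightarrow> ennreal" where
  "hyp_volume A =
     (\<integral>\<^sup>+ y \<in> klein ` (A \<inter> hyp). ennreal ((1 - (norm y)\<^sup>2) powr (-5/2)) \<partial>lborel)"

definition polytope :: "nat set \<Rightarrow> (nat \<Rightarrow> lor) \<Rightarrow> lor set" where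
  "polytope I e = {x \<in> hyp. \<forall>i\<in>I. lorentz x (e i) \<le> 0}"

definition facet :: "nat set \<Rightarrow> (nat \<Rightarrow> lor) \<Rightarrow> nat \<Rightarrow> lor set" where
  "facet I e i = {x \<in> polytope I e. lorentz x (e i) = 0}"

definition dihedral :: "lor \<Rightarrow> lor \<Rightarrow> real" where
  "dihedral u w = arccos (- lorentz u w)"

text \<open>Coxeter labels: Some m means label m (m = 2: no edge), None means \<infinity>.
  Gram entry: -cos(pi/m), resp. -1 (hyperplanes tangent at infinity).\<close>
definition gram_entry :: "nat option \<Rightarrow> real" where
  "gram_entry m = (case m of None \<Rightarrow> -1 | Some k \<Rightarrow> - cos (pi / real k))"

text \<open>A (convex, finite-sided) polytope in H^4 whose bounding hyperplanes are indexed
  by the nodes I, with outward unit normals e i: nonempty interior, every hyperplane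
  contributes a facet (irredundance), and the Gram matrix of the normals is the one
  of the Coxeter diagram with labels m (so the dihedral angles are pi/m_ij, and
  label \<infinity> means tangent at infinity).\<close>
definition coxeter_polytope_with_diagram ::
    "nat set \<Rightarrow> (nat \<Rightarrow> nat \<Rightarrow> nat option) \<Rightarrow> (nat \<Rightarrow> lor) \<Rightarrow> bool" where
  "coxeter_polytope_with_diagram I m e \<longleftrightarrow>
     finite I \<and>
     (\<forall>i\<in>I. lorentz (e i) (e i) = 1) \<and>
     (\<forall>i\<in>I. \<forall>j\<in>I. i \<noteq> j \<longrightarrow> lorentz (e i) (e j) = gram_entry (m i j)) \<and>
     (\<exists>x\<in>hyp. \<forall>i\<in>I. lorentz x (e i) < 0) \<and>
     (\<forall>i\<in>I. \<exists>x\<in>hyp. lorentz x (e i) > 0 \<and> (\<forall>j\<in>I - {i}. lorentz x (e j) < 0))"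

text \<open>Ideal vertex: a light-like future point (normalised to time coordinate 1) in the
  closure of the polytope at infinity which is a vertex, i.e. the normals of the
  facets through it cut out exactly the line through it.\<close>
definition ideal_vertex :: "nat set \<Rightarrow> (nat \<Rightarrow> lor) \<Rightarrow> lor \<Rightarrow> bool" where
  "ideal_vertex I e v \<longleftrightarrow>
     lorentz v v = 0 \<and> snd v = 1 \<and> (\<forall>i\<in>I. lorentz v (e i) \<le> 0) \<and>
     (\<forall>w. (\<forall>i\<in>I. lorentz v (e i) = 0 \<longrightarrow> lorentz w (e i) = 0) \<longrightarrow> (\<exists>c. w = c *\<^sub>R v))"

text \<open>Horosphere centred at the ideal point v; small c means deep in the cusp.
  Its intrinsic (flat) metric is given by the Lorentzian chord length.\<close>
definition horosphere :: "lor \<Rightarrow> real \<Rightarrow> lor set" where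
  "horosphere v c = {x \<in> hyp. lorentz x v = - c}"

text \<open>Right prism of height h over the right isosceles triangle with legs a
  (the Euclidean triangle with angles pi/2, pi/4, pi/4).\<close>
definition tri_prism :: "real \<Rightarrow> real \<Rightarrow> (real \<times> real \<times> real) set" where
  "tri_prism a h = {(x, y, z). 0 \<le> x \<and> 0 \<le> y \<and> x + y \<le> a \<and> 0 \<le> z \<and> z \<le> h}"

definition is_right_prism_link :: "lor set \<Rightarrow> lor set \<Rightarrow> bool" where
  "is_right_prism_link S A \<longleftrightarrow>
     (\<exists>\<phi> :: real \<times> real \<times> real \<Rightarrow> lor. \<exists>a h. a > 0 \<and> h > 0 \<and>
        \<phi> ` UNIV = S \<and>
        (\<forall>p q. lorentz (\<phi> p - \<phi> q) (\<phi> p - \<phi> q) = (dist p q)\<^sup>2) \<and>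
        \<phi> ` tri_prism a h = A)"

definition D_m :: "nat \<Rightarrow> nat \<Rightarrow> nat option" where
  "D_m i j =
     (if {i, j} = {6, 5} \<or> {i, j} = {5, 4} \<or> {i, j} = {3, 2} \<or> {i, j} = {1, 7} then Some 4
      else if {i, j} = {4, 3} \<or> {i, j} = {7, 6} then Some 6
      else if {i, j} = {2, 1} then None
      else Some 2)"

end

(*
  P0 is realised by seven explicit unit normals in R^(4,1) whose Gram matrix is the one of D.
  The normals 1, 2, 4, 5, 6 are orthogonal to the light-like vector v = (0,0,0,1,1). In
  horospherical coordinates centred at v these five facets are vertical and bound a right prism
  over a (pi/2, pi/4, pi/4)-triangle, while the facets 3 and 7 miss all small horospheres.

  The key estimate is the quadratic inequality (t - x4) t / 10 <= t^2 - |x|^2 on the cone over P0.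
  On the light cone it forces x = v, so v is the only ideal vertex. On the hyperboloid it gives
  1 - |y|^2 >= (1 - y4) / 10 in Klein coordinates y; covering the resulting wedge at v by boxes of
  size 4^-k, on which the volume density is at most 32^(k+3), yields a convergent geometric
  series, hence finite volume.

  The angle condition (b) holds for every pair of intersecting facets, bounded or not: all finite
  labels of D are even, and the two facets with label infinity do not meet.
*)
theory Submission
  imports Defs
begin

section \<open>Minkowski space\<close>

lemma lorentz_sym: "lorentz x y = lorentz y x"
  by (simp add: lorentz_def inner_commute mult.commute)

lemma lorentz_scaleR_left [simp]: "lorentz (r *\<^sub>R x) y = r * lorentz x y"
  by (simp add: lorentz_def algebra_simps)

lemma lorentz_scaleR_right [simp]: "lorentz x (r *\<^sub>R y) = r * lorentz x y"
  by (simp add: lorentz_def algebra_simps)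

lemma lorentz_add_left: "lorentz (x + y) z = lorentz x z + lorentz y z"
  by (simp add: lorentz_def algebra_simps)

lemma lorentz_add_right: "lorentz x (y + z) = lorentz x y + lorentz x z"
  by (simp add: lorentz_def algebra_simps)

lemma hyp_scaleR_timelike:
  assumes "lorentz x x < 0" "0 < snd x"
  obtains r where "0 < r" "r *\<^sub>R x \<in> hyp"
proof
  define r where "r = 1 / sqrt (- lorentz x x)"
  show "0 < r" using assms(1) by (simp add: r_def)
  have "lorentz (r *\<^sub>R x) (r *\<^sub>R x) = r\<^sup>2 * lorentz x x"
    by (simp add: power2_eq_square)
  also have "\<dots> = -1"
    using assms(1) by (simp add: r_def power_divide)
  finally show "r *\<^sub>R x \<in> hyp"
    using \<open>0 < r\<close> assms(2) by (simp add: hyp_def)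
qed

lemma hyp_orthogonal_lightlike:
  assumes x: "x \<in> hyp" and n: "lorentz n n = 0" and xn: "lorentz x n = 0"
  shows "n = 0"
proof -
  obtain s t where st: "x = (s, t)" by (cases x)
  obtain m \<tau> where m\<tau>: "n = (m, \<tau>)" by (cases n)
  have ss: "s \<bullet> s = t\<^sup>2 - 1" and mm: "m \<bullet> m = \<tau>\<^sup>2" and sm: "s \<bullet> m = t * \<tau>"
    using x n xn by (auto simp: hyp_def lorentz_def st m\<tau> power2_eq_square)
  have "(t * \<tau>)\<^sup>2 \<le> (s \<bullet> s) * (m \<bullet> m)"
    using Cauchy_Schwarz_ineq[of s m] by (simp only: sm)
  then have "\<tau>\<^sup>2 \<le> 0" by (simp add: ss mm power_mult_distrib algebra_simps)
  then have "\<tau> = 0" by simp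
  with mm show "n = 0" by (simp add: m\<tau> zero_prod_def)
qed

text \<open>Hyperplanes tangent at infinity do not meet in \<open>H\<^sup>4\<close>: the sum of their unit
  normals is light-like and orthogonal to every common point.\<close>
lemma tangent_hyperplanes_disjoint:
  assumes "lorentz u u = 1" "lorentz w w = 1" "lorentz u w = -1" "u + w \<noteq> 0"
    and "x \<in> hyp" "lorentz x u = 0"
  shows "lorentz x w \<noteq> 0"
proof
  assume "lorentz x w = 0"
  then have "lorentz x (u + w) = 0" using assms(6) by (simp add: lorentz_add_right)
  moreover have "lorentz (u + w) (u + w) = 0"
    using assms(1-3) by (simp add: lorentz_add_left lorentz_add_right lorentz_sym[of w u])
  ultimately show False using hyp_orthogonal_lightlike assms(4,5) by blast
qed

lemma dihedral_gram_entry: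
  assumes "lorentz u w = gram_entry (Some m)" "0 < m"
  shows "dihedral u w = pi / real m"
proof -
  have "0 \<le> pi / real m" "pi / real m \<le> pi"
    using assms(2) by (auto simp: field_simps)
  then show ?thesis
    using assms(1) by (simp add: dihedral_def gram_entry_def arccos_cos)
qed

definition vec4 :: "real \<Rightarrow> real \<Rightarrow> real \<Rightarrow> real \<Rightarrow> real^4" where
  "vec4 a b c d = (\<chi> i. if i = 1 then a else if i = 2 then b else if i = 3 then c else d)"

lemma vec4_nth [simp]:
  "vec4 a b c d $ 1 = a" "vec4 a b c d $ 2 = b" "vec4 a b c d $ 3 = c" "vec4 a b c d $ 4 = d"
  by (simp_all add: vec4_def)

definition lvec :: "real \<Rightarrow> real \<Rightarrow> real \<Rightarrow> real \<Rightarrow> real \<Rightarrow> lor" where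
  "lvec a b c d t = (vec4 a b c d, t)"

lemma lvec_cases:
  obtains a b c d t where "x = lvec a b c d t"
proof
  show "x = lvec (fst x $ 1) (fst x $ 2) (fst x $ 3) (fst x $ 4) (snd x)"
    by (simp add: lvec_def prod_eq_iff vec_eq_iff forall_4)
qed

lemma lvec_eq_iff:
  "lvec a b c d t = lvec a' b' c' d' t' \<longleftrightarrow> a = a' \<and> b = b' \<and> c = c' \<and> d = d' \<and> t = t'"
  by (auto simp: lvec_def vec_eq_iff forall_4)

lemma lvec_diff: "lvec a b c d t - lvec a' b' c' d' t' = lvec (a - a') (b - b') (c - c') (d - d') (t - t')"
  by (simp add: lvec_def vec_eq_iff forall_4)

lemma lvec_scaleR: "r *\<^sub>R lvec a b c d t = lvec (r * a) (r * b) (r * c) (r * d) (r * t)"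
  by (simp add: lvec_def vec_eq_iff forall_4)

lemma fst_lvec [simp]: "fst (lvec a b c d t) = vec4 a b c d"
  and snd_lvec [simp]: "snd (lvec a b c d t) = t"
  by (simp_all add: lvec_def)

lemma lorentz_lvec [simp]:
  "lorentz (lvec a b c d t) (lvec a' b' c' d' t') = a * a' + b * b' + c * c' + d * d' - t * t'"
  by (simp add: lorentz_def lvec_def inner_vec_def sum_4)

lemma klein_lvec: "klein (lvec a b c d t) = vec4 (a / t) (b / t) (c / t) (d / t)"
  by (simp add: klein_def lvec_def vec_eq_iff forall_4 divide_inverse mult.commute)

lemma norm_klein_hyp:
  assumes "x \<in> hyp"
  shows "1 - (norm (klein x))\<^sup>2 = 1 / (snd x)\<^sup>2"
proof -
  have t: "0 < snd x" and "fst x \<bullet> fst x = (snd x)\<^sup>2 - 1"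
    using assms by (auto simp: hyp_def lorentz_def power2_eq_square)
  then have s: "(norm (fst x))\<^sup>2 = (snd x)\<^sup>2 - 1"
    by (simp add: power2_norm_eq_inner)
  have "(norm (klein x))\<^sup>2 = (norm (fst x))\<^sup>2 / (snd x)\<^sup>2"
    using t by (simp add: klein_def field_simps)
  with s t show ?thesis by (simp add: field_simps)
qed

section \<open>Finite volume near an ideal point\<close>

definition cusp_box :: "nat \<Rightarrow> (real^4) set" where
  "cusp_box k = cbox (vec4 0 0 0 (1 - (1/4)^k)) (vec4 (2 * (1/4)^k) (2 * (1/4)^k) (2 * (1/4)^k) 1)"

lemma mem_cusp_box:
  "y \<in> cusp_box k \<longleftrightarrow>
     (\<forall>i\<in>{1,2,3}. 0 \<le> y $ i \<and> y $ i \<le> 2 * (1/4)^k) \<and> 1 - (1/4)^k \<le> y $ 4 \<and> y $ 4 \<le> 1"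
  by (auto simp: cusp_box_def mem_box_cart forall_4)

lemma emeasure_cusp_box: "emeasure lborel (cusp_box k) = ennreal (8 * (1/256)^k)"
proof -
  have prod_4: "prod f UNIV = f 1 * f 2 * f 3 * f (4::4)" for f :: "4 \<Rightarrow> real"
    unfolding UNIV_4 by (simp add: ac_simps)
  have "vec4 0 0 0 (1 - (1/4)^k) \<in> cusp_box k"
    by (simp add: mem_cusp_box)
  then have "measure lborel (cusp_box k) = 2 * (1/4)^k * (2 * (1/4)^k) * (2 * (1/4)^k) * (1/4)^k"
    unfolding cusp_box_def by (subst content_cbox_cart) (auto simp: prod_4)
  also have "\<dots> = 8 * (1/256)^k"
    by (simp add: power_mult_distrib[symmetric])
  finally show ?thesis
    unfolding cusp_box_def
    by (subst emeasure_eq_ennreal_measure) (simp_all add: emeasure_lborel_cbox_eq)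
qed

lemma nn_integral_finite_if_cusp_box_bound:
  fixes S :: "(real^4) set" and F :: "real^4 \<Rightarrow> real"
  assumes "\<And>y. y \<in> S \<Longrightarrow> \<exists>k. y \<in> cusp_box k \<and> F y \<le> 32^(k+3)"
  shows "(\<integral>\<^sup>+ y \<in> S. ennreal (F y) \<partial>lborel) < \<infinity>"
proof -
  let ?G = "\<lambda>k y. ennreal (32^(k+3)) * indicator (cusp_box k) y"
  have dominated: "ennreal (F y) * indicator S y \<le> (\<Sum>k. ?G k y)" for y
  proof (cases "y \<in> S")
    case True
    then obtain k where "y \<in> cusp_box k" "F y \<le> 32^(k+3)" using assms by blast
    then have "ennreal (F y) * indicator S y \<le> ?G k y"
      using True by (simp add: ennreal_leI)
    also have "\<dots> \<le> (\<Sum>k. ?G k y)"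
    proof (rule ccontr)
      assume "\<not> ?G k y \<le> (\<Sum>k. ?G k y)"
      then have "(\<Sum>k. ?G k y) < ?G k y" by simp
      then show False using ennreal_suminf_lessD[of "\<lambda>k. ?G k y" "?G k y" k] by simp
    qed
    finally show ?thesis .
  qed simp
  have "(\<integral>\<^sup>+ y \<in> S. ennreal (F y) \<partial>lborel) \<le> (\<integral>\<^sup>+ y. (\<Sum>k. ?G k y) \<partial>lborel)"
    by (intro nn_integral_mono dominated)
  also have "\<dots> = (\<Sum>k. \<integral>\<^sup>+ y. ?G k y \<partial>lborel)"
    by (rule nn_integral_suminf) (simp add: cusp_box_def)
  also have "\<dots> = (\<Sum>k. ennreal (8 * 32^3 * (1/8)^k))"
  proof (rule suminf_cong)
    fix k :: nat
    have "(\<integral>\<^sup>+ y. ?G k y \<partial>lborel) = ennreal (32^(k+3)) * emeasure lborel (cusp_box k)"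
      by (rule nn_integral_cmult_indicator) (simp add: cusp_box_def)
    also have "\<dots> = ennreal (32^(k+3) * (8 * (1/256)^k))"
      by (simp add: emeasure_cusp_box ennreal_mult)
    also have "(32::real)^(k+3) * (8 * (1/256)^k) = 8 * 32^3 * (1/8)^k"
      by (simp add: power_add power_mult_distrib[symmetric])
    finally show "(\<integral>\<^sup>+ y. ?G k y \<partial>lborel) = ennreal (8 * 32^3 * (1/8)^k)" .
  qed
  also have "\<dots> = ennreal (\<Sum>k. 8 * 32^3 * (1/8)^k)"
    by (intro suminf_ennreal2 summable_mult summable_geometric) simp_all
  also have "\<dots> < \<infinity>" by simp
  finally show ?thesis .
qed

lemma powr_quarter_power: "((1/4::real)^n) powr (-5/2) = 32^n"
proof -
  have "(1/4::real) powr (-5/2) = 4 powr (5/2)"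
    by (simp add: powr_minus_divide powr_divide)
  also have "\<dots> = 4 powr 2 * 4 powr (1/2)"
    by (simp flip: powr_add)
  also have "\<dots> = 32"
    by (simp add: powr_half_sqrt)
  finally have quarter: "(1/4::real) powr (-5/2) = 32" .
  have "((1/4::real)^n) powr (-5/2) = ((1/4) powr (-5/2)) powr real n"
    by (simp add: powr_realpow[symmetric] powr_powr mult.commute)
  also have "\<dots> = 32^n"
    unfolding quarter by (simp add: powr_realpow)
  finally show ?thesis .
qed

definition cusp_wedge :: "(real^4) set" where
  "cusp_wedge = {y. 0 \<le> y $ 4 \<and> y $ 4 < 1 \<and> (\<forall>i\<in>{1,2,3}. 0 \<le> y $ i \<and> y $ i \<le> 2 * (1 - y $ 4)) \<and>
     (1 - y $ 4) / 10 \<le> 1 - (norm y)\<^sup>2}"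

lemma cusp_wedge_cover:
  assumes "y \<in> cusp_wedge"
  shows "\<exists>k. y \<in> cusp_box k \<and> (1/4)^(k+3) \<le> 1 - (norm y)\<^sup>2"
proof -
  define \<delta> where "\<delta> = 1 - y $ 4"
  have \<delta>: "0 < \<delta>" "\<delta> \<le> 1" using assms by (auto simp: cusp_wedge_def \<delta>_def)
  obtain k where k: "\<delta> \<le> (1/4)^k" "(1/4)^(Suc k) < \<delta>"
    using exists_least_lemma[of "\<lambda>n. (1/4::real)^n < \<delta>"] real_arch_pow_inv[of \<delta> "1/4"] \<delta>
    by (auto simp: not_less)
  have "y \<in> cusp_box k"
    using assms k unfolding mem_cusp_box by (fastforce simp: cusp_wedge_def \<delta>_def)
  moreover have "(1/4::real)^(k+3) = (1/4)^(Suc k) / 16"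
    by (simp add: power_add eval_nat_numeral)
  then have "(1/4)^(k+3) \<le> \<delta> / 10"
    using k(2) by (simp add: field_simps)
  then have "(1/4)^(k+3) \<le> 1 - (norm y)\<^sup>2"
    using assms by (auto simp: cusp_wedge_def \<delta>_def)
  ultimately show ?thesis by blast
qed

lemma hyp_volume_finite_if_klein_cusp_wedge:
  assumes "klein ` (A \<inter> hyp) \<subseteq> cusp_wedge"
  shows "hyp_volume A < \<infinity>"
  unfolding hyp_volume_def
proof (rule nn_integral_finite_if_cusp_box_bound)
  fix y assume "y \<in> klein ` (A \<inter> hyp)"
  then obtain k where k: "y \<in> cusp_box k" "(1/4)^(k+3) \<le> 1 - (norm y)\<^sup>2"
    using assms cusp_wedge_cover by blast
  have "(1 - (norm y)\<^sup>2) powr (-5/2) \<le> ((1/4)^(k+3)) powr (-5/2)"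
    by (rule powr_mono2') (use k in auto)
  also have "\<dots> = 32^(k+3)"
    by (rule powr_quarter_power)
  finally show "\<exists>k. y \<in> cusp_box k \<and> (1 - (norm y)\<^sup>2) powr (-5/2) \<le> 32^(k+3)"
    using k(1) by blast
qed

section \<open>Horospheres centred at \<open>(0,0,0,1)\<close>\<close>

definition cusp_pt :: lor where
  "cusp_pt = lvec 0 0 0 1 1"

text \<open>Upper half-space coordinates: on the horosphere \<open>\<langle>x, cusp_pt\<rangle> = -c\<close> one has
  \<open>x\<^sub>4 = t - c\<close>, and \<open>\<langle>x, x\<rangle> = -1\<close> then determines \<open>t\<close>.\<close>
definition horo_chart :: "real \<Rightarrow> real \<times> real \<times> real \<Rightarrow> lor" where
  "horo_chart c = (\<lambda>(a, b, z). let t = ((1 + a\<^sup>2 + b\<^sup>2 + z\<^sup>2) / c + c) / 2 in lvec a b z (t - c) t)"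

lemma horo_chart_in_horosphere:
  assumes "0 < c"
  shows "horo_chart c p \<in> horosphere cusp_pt c"
proof -
  obtain a b z where p: "p = (a, b, z)" by (cases p)
  define t where "t = ((1 + a\<^sup>2 + b\<^sup>2 + z\<^sup>2) / c + c) / 2"
  have chart: "horo_chart c p = lvec a b z (t - c) t"
    by (simp add: horo_chart_def p t_def)
  have "2 * c * t = 1 + a\<^sup>2 + b\<^sup>2 + z\<^sup>2 + c\<^sup>2"
    using assms by (simp add: t_def field_simps power2_eq_square)
  then have "lorentz (horo_chart c p) (horo_chart c p) = -1"
    by (simp add: chart power2_eq_square algebra_simps)
  moreover have "0 < t"
    using assms by (simp add: t_def add_pos_nonneg)
  ultimately show ?thesis
    by (simp add: chart horosphere_def hyp_def cusp_pt_def)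
qed

lemma horosphere_horo_chart:
  assumes "0 < c" "x \<in> horosphere cusp_pt c"
  shows "x = horo_chart c (fst x $ 1, fst x $ 2, fst x $ 3)"
proof -
  obtain a b z d t where x: "x = lvec a b z d t" by (rule lvec_cases)
  have d: "d = t - c" and hyp: "a\<^sup>2 + b\<^sup>2 + z\<^sup>2 + d\<^sup>2 - t\<^sup>2 = -1"
    using assms(2) by (auto simp: x horosphere_def hyp_def cusp_pt_def power2_eq_square)
  have "2 * c * t = 1 + a\<^sup>2 + b\<^sup>2 + z\<^sup>2 + c\<^sup>2"
    using hyp unfolding d by (simp add: power2_eq_square algebra_simps)
  then have "((1 + a\<^sup>2 + b\<^sup>2 + z\<^sup>2) / c + c) / 2 = t"
    using assms(1) by (simp add: field_simps power2_eq_square)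
  then show ?thesis
    by (simp add: x d horo_chart_def lvec_eq_iff)
qed

lemma range_horo_chart: "0 < c \<Longrightarrow> range (horo_chart c) = horosphere cusp_pt c"
  using horo_chart_in_horosphere horosphere_horo_chart by blast

lemma horo_chart_isometric:
  "lorentz (horo_chart c p - horo_chart c q) (horo_chart c p - horo_chart c q) = (dist p q)\<^sup>2"
proof -
  obtain a b z where p: "p = (a, b, z)" by (cases p)
  obtain a' b' z' where q: "q = (a', b', z')" by (cases q)
  define t where "t = ((1 + a\<^sup>2 + b\<^sup>2 + z\<^sup>2) / c + c) / 2"
  define t' where "t' = ((1 + a'\<^sup>2 + b'\<^sup>2 + z'\<^sup>2) / c + c) / 2"
  have "horo_chart c p = lvec a b z (t - c) t" "horo_chart c q = lvec a' b' z' (t' - c) t'"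
    by (simp_all add: horo_chart_def p q t_def t'_def)
  then have "lorentz (horo_chart c p - horo_chart c q) (horo_chart c p - horo_chart c q)
      = (a - a')\<^sup>2 + (b - b')\<^sup>2 + (z - z')\<^sup>2"
    by (simp add: lvec_diff power2_eq_square algebra_simps)
  also have "\<dots> = (dist p q)\<^sup>2"
    by (simp add: p q dist_Pair_Pair dist_real_def)
  finally show ?thesis .
qed

section \<open>The polytope \<open>P\<^sub>0\<close>\<close>

definition P0_normal :: "nat \<Rightarrow> lor" where
  "P0_normal i =
     (if i = 1 then lvec 0 0 (-1) 0 0
      else if i = 2 then lvec 0 0 1 (sqrt 2) (sqrt 2)
      else if i = 3 then lvec (sqrt 3 / 2) 0 0 (-1/2) 0
      else if i = 4 then lvec (-1) 0 0 0 0
      else if i = 5 then lvec (sqrt 2 / 2) (sqrt 2 / 2) 0 (sqrt 6 / 2) (sqrt 6 / 2)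
      else if i = 6 then lvec 0 (-1) 0 0 0
      else lvec 0 (sqrt 3 / 2) (sqrt 2 / 2) 0 (1/2))"

abbreviation P0 :: "lor set" where
  "P0 \<equiv> polytope {1..7} P0_normal"

lemma atLeastAtMost_1_7: "{1..7::nat} = {1, 2, 3, 4, 5, 6, 7}"
  by auto

lemma sqrt_6: "sqrt 6 = sqrt 2 * sqrt (3::real)"
  by (simp add: real_sqrt_mult[symmetric])

lemma sqrt_bounds:
  "1.41 < sqrt (2::real)" "sqrt (2::real) < 1.42"
  "1.73 < sqrt (3::real)" "sqrt (3::real) < 1.74"
  "2.44 < sqrt (6::real)" "sqrt (6::real) < 2.45"
  by (rule real_less_rsqrt real_less_lsqrt; simp add: power2_eq_square)+

lemma gram_entry_simps:
  "gram_entry None = -1" "gram_entry (Some 2) = 0"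
  "gram_entry (Some 4) = - sqrt 2 / 2" "gram_entry (Some 6) = - sqrt 3 / 2"
  by (simp_all add: gram_entry_def cos_45 cos_30)

lemma P0_normal_unit:
  assumes "i \<in> {1..7}"
  shows "lorentz (P0_normal i) (P0_normal i) = 1"
proof -
  have "i \<in> {1, 2, 3, 4, 5, 6, 7}" using assms by auto
  then show ?thesis by (auto simp: P0_normal_def sqrt_6 field_simps)
qed

lemma P0_normal_gram:
  assumes "i \<in> {1..7}" "j \<in> {1..7}" "i \<noteq> j"
  shows "lorentz (P0_normal i) (P0_normal j) = gram_entry (D_m i j)"
proof -
  have "i \<in> {1, 2, 3, 4, 5, 6, 7}" "j \<in> {1, 2, 3, 4, 5, 6, 7}" using assms(1,2) by auto
  then show ?thesis
    using assms(3)
    by (auto simp: P0_normal_def D_m_def doubleton_eq_iff gram_entry_simps sqrt_6 field_simps)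
qed

lemma P0_normal_nonpos_iff:
  "(\<forall>i\<in>{1..7}. lorentz (lvec a b c d t) (P0_normal i) \<le> 0) \<longleftrightarrow>
     0 \<le> a \<and> 0 \<le> b \<and> 0 \<le> c \<and> c \<le> sqrt 2 * (t - d) \<and> a + b \<le> sqrt 3 * (t - d) \<and>
     sqrt 3 * a \<le> d \<and> sqrt 3 * b + sqrt 2 * c \<le> t"
proof -
  let ?l = "\<lambda>i. lorentz (lvec a b c d t) (P0_normal i)"
  have l3: "?l 3 = (sqrt 3 * a - d) / 2" and l7: "?l 7 = (sqrt 3 * b + sqrt 2 * c - t) / 2"
    by (simp_all add: P0_normal_def field_simps)
  have l5: "?l 5 = sqrt 2 / 2 * (a + b - sqrt 3 * (t - d))"
    by (simp add: P0_normal_def sqrt_6 algebra_simps)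
  have "?l 1 \<le> 0 \<longleftrightarrow> 0 \<le> c" "?l 4 \<le> 0 \<longleftrightarrow> 0 \<le> a" "?l 6 \<le> 0 \<longleftrightarrow> 0 \<le> b"
    by (simp_all add: P0_normal_def)
  moreover have "?l 2 \<le> 0 \<longleftrightarrow> c \<le> sqrt 2 * (t - d)"
    by (auto simp: P0_normal_def algebra_simps)
  moreover have "?l 3 \<le> 0 \<longleftrightarrow> sqrt 3 * a \<le> d" "?l 7 \<le> 0 \<longleftrightarrow> sqrt 3 * b + sqrt 2 * c \<le> t"
    unfolding l3 l7 by simp_all
  moreover have "?l 5 \<le> 0 \<longleftrightarrow> a + b \<le> sqrt 3 * (t - d)"
    unfolding l5 by (simp add: mult_le_0_iff)
  ultimately show ?thesis
    unfolding atLeastAtMost_1_7 by auto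
qed

text \<open>The difference is a nonnegative combination of pairwise products of the seven
  constraints.\<close>
lemma quadratic_certificate:
  fixes u v w \<delta> t :: real
  assumes "0 \<le> u" "0 \<le> v" "0 \<le> w" "w \<le> 2 * \<delta>" "u + v \<le> 3 * \<delta>" "u \<le> t - \<delta>" "v + w \<le> t"
  shows "\<delta> * t / 10 \<le> 2 * \<delta> * t - \<delta>\<^sup>2 - u\<^sup>2 / 3 - v\<^sup>2 / 3 - w\<^sup>2 / 2"
proof -
  let ?p = "2 * \<delta> - w" and ?q = "3 * \<delta> - u - v" and ?r = "t - \<delta> - u" and ?s = "t - v - w"
  have "2 * \<delta> * t - \<delta>\<^sup>2 - u\<^sup>2 / 3 - v\<^sup>2 / 3 - w\<^sup>2 / 2 - \<delta> * t / 10 =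
      11/30 * (u * v) + 1/5 * (u * ?p) + 7/30 * (u * ?q) + 3/20 * (u * ?r) + 3/20 * (v * w)
      + 17/60 * (v * ?q) + 3/20 * (v * ?s) + 2/5 * (w * ?p) + 13/40 * (w * ?r) + 2/5 * (w * ?s)
      + 17/40 * (?p * ?r) + 3/10 * (?p * ?s) + 1/20 * (?q * ?r) + 1/10 * (?q * ?s)"
    by (simp add: field_simps power2_eq_square)
  moreover have "0 \<le> \<dots>"
    using assms by (intro add_nonneg_nonneg mult_nonneg_nonneg) auto
  ultimately show ?thesis by linarith
qed

lemma P0_quadratic_bound:
  assumes "\<forall>i\<in>{1..7}. lorentz (lvec a b c d t) (P0_normal i) \<le> 0"
  shows "(t - d) * t / 10 \<le> t\<^sup>2 - (a\<^sup>2 + b\<^sup>2 + c\<^sup>2 + d\<^sup>2)"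
proof -
  have "0 \<le> a" "0 \<le> b" "0 \<le> c" "c \<le> sqrt 2 * (t - d)" "a + b \<le> sqrt 3 * (t - d)"
    "sqrt 3 * a \<le> d" "sqrt 3 * b + sqrt 2 * c \<le> t"
    using assms[unfolded P0_normal_nonpos_iff] by simp_all
  then have "0 \<le> sqrt 3 * a" "0 \<le> sqrt 3 * b" "0 \<le> sqrt 2 * c"
    "sqrt 2 * c \<le> 2 * (t - d)" "sqrt 3 * a + sqrt 3 * b \<le> 3 * (t - d)"
    using mult_left_mono[of c "sqrt 2 * (t - d)" "sqrt 2"]
      mult_left_mono[of "a + b" "sqrt 3 * (t - d)" "sqrt 3"]
    by (simp_all add: mult.assoc[symmetric] distrib_left)
  then have "(t - d) * t / 10 \<le> 2 * (t - d) * t - (t - d)\<^sup>2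
      - (sqrt 3 * a)\<^sup>2 / 3 - (sqrt 3 * b)\<^sup>2 / 3 - (sqrt 2 * c)\<^sup>2 / 2"
    by (intro quadratic_certificate) (use \<open>sqrt 3 * a \<le> d\<close> \<open>sqrt 3 * b + sqrt 2 * c \<le> t\<close> in auto)
  then show ?thesis
    by (simp add: power_mult_distrib power2_eq_square algebra_simps)
qed

lemma P0_coordinate_bounds:
  assumes "lvec a b c d t \<in> P0"
  shows "0 \<le> a" "0 \<le> b" "0 \<le> c" "0 \<le> d" "d < t"
    and "a \<le> 2 * (t - d)" "b \<le> 2 * (t - d)" "c \<le> 2 * (t - d)" "(t - d) * t \<le> 10"
proof -
  have "lvec a b c d t \<in> hyp" and cone: "\<forall>i\<in>{1..7}. lorentz (lvec a b c d t) (P0_normal i) \<le> 0"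
    using assms unfolding polytope_def by blast+
  then have hyp: "t\<^sup>2 - (a\<^sup>2 + b\<^sup>2 + c\<^sup>2 + d\<^sup>2) = 1"
    by (simp add: hyp_def power2_eq_square algebra_simps)
  have ineqs: "0 \<le> a" "0 \<le> b" "0 \<le> c" "c \<le> sqrt 2 * (t - d)" "a + b \<le> sqrt 3 * (t - d)"
    "sqrt 3 * a \<le> d"
    using cone[unfolded P0_normal_nonpos_iff] by simp_all
  then show "0 \<le> a" "0 \<le> b" "0 \<le> c" by simp_all
  have "0 \<le> sqrt 2 * (t - d)" using ineqs(3,4) by linarith
  then have "0 \<le> t - d" by (simp add: zero_le_mult_iff)
  moreover have "t - d \<noteq> 0"
  proof
    assume "t - d = 0"
    then have "a = 0" "b = 0" "c = 0" "d = t" using ineqs(1-5) by auto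
    then show False using hyp by simp
  qed
  ultimately have \<delta>: "0 < t - d" by simp
  then show "d < t" by simp
  have "0 \<le> sqrt 3 * a" using ineqs(1) by simp
  then show "0 \<le> d" using ineqs(6) by linarith
  have "sqrt 3 * (t - d) \<le> 2 * (t - d)" "sqrt 2 * (t - d) \<le> 2 * (t - d)"
    using sqrt_bounds \<delta> by (intro mult_right_mono; simp)+
  then show "a \<le> 2 * (t - d)" "b \<le> 2 * (t - d)" "c \<le> 2 * (t - d)"
    using ineqs by linarith+
  show "(t - d) * t \<le> 10"
    using P0_quadratic_bound[OF cone] hyp by simp
qed

lemma klein_P0_cusp_wedge: "klein ` (P0 \<inter> hyp) \<subseteq> cusp_wedge"
proof
  fix y assume "y \<in> klein ` (P0 \<inter> hyp)"
  then obtain x where "x \<in> P0" "y = klein x" by blast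
  obtain a b c d t where x: "x = lvec a b c d t" by (rule lvec_cases)
  note bounds = P0_coordinate_bounds[OF \<open>x \<in> P0\<close>[unfolded x]]
  then have t: "0 < t" by linarith
  have coords: "a / t \<le> 2 * (1 - d / t)" "b / t \<le> 2 * (1 - d / t)" "c / t \<le> 2 * (1 - d / t)"
    using bounds(6-8) t by (simp_all add: field_simps)
  have "(1 - d / t) / 10 = (t - d) * t / (10 * t\<^sup>2)"
    using t by (simp add: field_simps power2_eq_square)
  also have "\<dots> \<le> 10 / (10 * t\<^sup>2)"
    using bounds(9) by (intro divide_right_mono) simp_all
  also have "\<dots> = 1 - (norm y)\<^sup>2"
    using norm_klein_hyp \<open>x \<in> P0\<close> by (simp add: \<open>y = klein x\<close> x polytope_def)
  finally have "(1 - d / t) / 10 \<le> 1 - (norm y)\<^sup>2" .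
  moreover have "0 \<le> d / t" "d / t < 1"
    using t bounds(4,5) by (simp_all add: field_simps)
  ultimately show "y \<in> cusp_wedge"
    using coords bounds(1-3) t
    by (simp add: cusp_wedge_def \<open>y = klein x\<close> x klein_lvec)
qed

lemma P0_finite_volume: "hyp_volume P0 < \<infinity>"
  by (rule hyp_volume_finite_if_klein_cusp_wedge[OF klein_P0_cusp_wedge])

definition P0_witness :: "nat \<Rightarrow> lor" where
  "P0_witness i =
     (if i = 0 then lvec 0.15 0.15 0.15 0.6 1
      else if i = 1 then lvec 0.15 0.15 (-0.7) 0.6 1
      else if i = 2 then lvec 0.1 0.1 0.4 0.8 1
      else if i = 3 then lvec 0.2 0.2 0.2 (-0.9) 1
      else if i = 4 then lvec (-0.9) 0.2 0.2 (-0.2) 1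
      else if i = 5 then lvec 0.25 0.3 0.15 0.8 1
      else if i = 6 then lvec 0.2 (-0.6) 0.2 0.7 1
      else lvec 0.15 0.4 0.45 0.55 1)"

lemma P0_witness_timelike: "lorentz (P0_witness i) (P0_witness i) < 0 \<and> 0 < snd (P0_witness i)"
  by (simp add: P0_witness_def)

lemma P0_witness_signs:
  assumes "i \<in> {0..7}" "j \<in> {1..7}"
  shows "if j = i then 0 < lorentz (P0_witness i) (P0_normal j)
         else lorentz (P0_witness i) (P0_normal j) < 0"
proof -
  have "i \<in> {0, 1, 2, 3, 4, 5, 6, 7}" "j \<in> {1, 2, 3, 4, 5, 6, 7}" using assms by auto
  then show ?thesis
    using sqrt_bounds by (auto simp: P0_witness_def P0_normal_def)
qed

lemma P0_coxeter: "coxeter_polytope_with_diagram {1..7} D_m P0_normal"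
proof -
  have hyp_witness: "\<exists>x\<in>hyp. \<forall>j\<in>{1..7}.
      (j = i \<longrightarrow> 0 < lorentz x (P0_normal j)) \<and> (j \<noteq> i \<longrightarrow> lorentz x (P0_normal j) < 0)"
    if "i \<in> {0..7}" for i
  proof -
    obtain r where "0 < r" "r *\<^sub>R P0_witness i \<in> hyp"
      using P0_witness_timelike hyp_scaleR_timelike by blast
    then show ?thesis
      using P0_witness_signs[OF that]
      by (intro bexI[of _ "r *\<^sub>R P0_witness i"]) (auto simp: mult_less_0_iff split: if_splits)
  qed
  have "\<exists>x\<in>hyp. \<forall>j\<in>{1..7}. lorentz x (P0_normal j) < 0"
    using hyp_witness[of 0] by auto
  moreover have "\<exists>x\<in>hyp. 0 < lorentz x (P0_normal i) \<and> (\<forall>j\<in>{1..7} - {i}. lorentz x (P0_normal j) < 0)"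
    if "i \<in> {1..7}" for i
    using hyp_witness[of i] that by fastforce
  ultimately show ?thesis
    using P0_normal_unit P0_normal_gram by (auto simp: coxeter_polytope_with_diagram_def)
qed

lemma ideal_vertex_cusp_pt: "ideal_vertex {1..7} P0_normal cusp_pt"
  unfolding ideal_vertex_def
proof (intro conjI allI impI)
  show "lorentz cusp_pt cusp_pt = 0" "snd cusp_pt = 1"
    by (simp_all add: cusp_pt_def)
  show "\<forall>i\<in>{1..7}. lorentz cusp_pt (P0_normal i) \<le> 0"
    unfolding cusp_pt_def P0_normal_nonpos_iff by simp
  fix w :: lor
  assume orth: "\<forall>i\<in>{1..7}. lorentz cusp_pt (P0_normal i) = 0 \<longrightarrow> lorentz w (P0_normal i) = 0"
  obtain a b c d t where w: "w = lvec a b c d t" by (rule lvec_cases)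
  have "lorentz w (P0_normal i) = 0" if "i \<in> {1, 2, 4, 6}" for i
    using orth[rule_format, of i] that by (auto simp: cusp_pt_def P0_normal_def)
  from this[of 1] this[of 2] this[of 4] this[of 6] have "a = 0" "b = 0" "c = 0" "d = t"
    by (simp_all add: w P0_normal_def)
  then show "\<exists>r. w = r *\<^sub>R cusp_pt"
    by (intro exI[of _ t]) (simp add: w cusp_pt_def lvec_scaleR)
qed

lemma P0_ideal_vertex_unique:
  assumes "ideal_vertex {1..7} P0_normal v"
  shows "v = cusp_pt"
proof -
  obtain a b c d t where v: "v = lvec a b c d t" by (rule lvec_cases)
  have "lorentz v v = 0" "snd v = 1" "\<forall>i\<in>{1..7}. lorentz v (P0_normal i) \<le> 0"
    using assms unfolding ideal_vertex_def by simp_all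
  then have cone: "\<forall>i\<in>{1..7}. lorentz (lvec a b c d 1) (P0_normal i) \<le> 0"
    and t: "t = 1" and null: "a\<^sup>2 + b\<^sup>2 + c\<^sup>2 + d\<^sup>2 = 1"
    by (simp_all add: v power2_eq_square)
  have ineqs: "0 \<le> a" "0 \<le> b" "0 \<le> c" "c \<le> sqrt 2 * (1 - d)" "a + b \<le> sqrt 3 * (1 - d)"
    using cone[unfolded P0_normal_nonpos_iff] by simp_all
  have "0 \<le> sqrt 2 * (1 - d)" using ineqs(3,4) by linarith
  then have "0 \<le> 1 - d" by (simp add: zero_le_mult_iff)
  moreover have "(1 - d) / 10 \<le> 0"
    using P0_quadratic_bound[OF cone] null by simp
  ultimately have "d = 1" by simp
  then show ?thesis
    using ineqs t by (simp add: v cusp_pt_def lvec_eq_iff)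
qed

lemma lorentz_cusp_pt_P0_normal:
  "lorentz cusp_pt (P0_normal i) = (if i \<in> {1, 2, 4, 5, 6} then 0 else -1/2)"
  by (simp add: cusp_pt_def P0_normal_def)

lemma P0_cusp_facets: "{i \<in> {1..7}. lorentz cusp_pt (P0_normal i) = 0} = {1, 2, 4, 5, 6}"
  unfolding atLeastAtMost_1_7 lorentz_cusp_pt_P0_normal by auto

lemma D_m_None_iff: "D_m i j = None \<longleftrightarrow> {i, j} = {1, 2}"
  unfolding D_m_def doubleton_eq_iff by auto

lemma D_m_even:
  assumes "D_m i j \<noteq> None"
  shows "\<exists>k>0. D_m i j = Some (2 * k)"
proof -
  have "D_m i j \<in> insert None ((\<lambda>k. Some (2 * k)) ` {1, 2, 3})"
    unfolding D_m_def by simp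
  then show ?thesis
    using assms by auto
qed

lemma P0_facets_1_2_disjoint: "facet {1..7} P0_normal 1 \<inter> facet {1..7} P0_normal 2 = {}"
proof -
  have "lorentz (P0_normal 1) (P0_normal 1) = 1" "lorentz (P0_normal 2) (P0_normal 2) = 1"
    "lorentz (P0_normal 1) (P0_normal 2) = -1"
    by (simp_all add: P0_normal_def)
  moreover have "P0_normal 1 + P0_normal 2 \<noteq> 0"
    by (simp add: P0_normal_def lvec_def zero_prod_def)
  ultimately have "lorentz x (P0_normal 2) \<noteq> 0" if "x \<in> hyp" "lorentz x (P0_normal 1) = 0" for x
    using tangent_hyperplanes_disjoint that by blast
  then show ?thesis
    by (auto simp: facet_def polytope_def)
qed

lemma P0_dihedral_even:
  assumes "i \<in> {1..7}" "j \<in> {1..7}" "i \<noteq> j"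
    and "facet {1..7} P0_normal i \<inter> facet {1..7} P0_normal j \<noteq> {}"
  shows "\<exists>k>0. dihedral (P0_normal i) (P0_normal j) = pi / real (2 * k)"
proof -
  have "{i, j} \<noteq> {1, 2}"
  proof
    assume "{i, j} = {1, 2}"
    then have "i = 1 \<and> j = 2 \<or> i = 2 \<and> j = 1" by (simp add: doubleton_eq_iff)
    then show False
      using assms(4) P0_facets_1_2_disjoint by (metis Int_commute)
  qed
  then have "D_m i j \<noteq> None"
    by (simp add: D_m_None_iff)
  then obtain k where k: "0 < k" "D_m i j = Some (2 * k)"
    using D_m_even by blast
  then have "lorentz (P0_normal i) (P0_normal j) = gram_entry (Some (2 * k))"
    using P0_normal_gram[OF assms(1-3)] by simp
  then have "dihedral (P0_normal i) (P0_normal j) = pi / real (2 * k)"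
    using k(1) by (intro dihedral_gram_entry) simp_all
  with k(1) show ?thesis by blast
qed

lemma P0_horosphere_in_prism:
  assumes "0 < c" "x \<in> P0 \<inter> horosphere cusp_pt c"
  shows "x \<in> horo_chart c ` tri_prism (sqrt 3 * c) (sqrt 2 * c)"
proof -
  obtain a b z d t where xl: "x = lvec a b z d t" by (rule lvec_cases)
  have cone: "\<forall>i\<in>{1..7}. lorentz (lvec a b z d t) (P0_normal i) \<le> 0" and "t - d = c"
    using assms(2) by (auto simp: polytope_def horosphere_def cusp_pt_def xl)
  then have "(a, b, z) \<in> tri_prism (sqrt 3 * c) (sqrt 2 * c)"
    using cone[unfolded P0_normal_nonpos_iff] by (auto simp: tri_prism_def)
  moreover have "x = horo_chart c (fst x $ 1, fst x $ 2, fst x $ 3)"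
    using assms by (intro horosphere_horo_chart) blast+
  then have "x = horo_chart c (a, b, z)"
    by (simp add: xl)
  ultimately show ?thesis by blast
qed

text \<open>Deep in the cusp (\<open>c \<le> 1/3\<close>) the facets 3 and 7 do not cut the horosphere.\<close>
lemma horo_chart_prism_in_P0:
  assumes "0 < c" "c \<le> 1/3" "(a, b, z) \<in> tri_prism (sqrt 3 * c) (sqrt 2 * c)"
  shows "horo_chart c (a, b, z) \<in> P0"
proof -
  have p: "0 \<le> a" "0 \<le> b" "a + b \<le> sqrt 3 * c" "0 \<le> z" "z \<le> sqrt 2 * c"
    using assms(3) by (auto simp: tri_prism_def)
  define t where "t = ((1 + a\<^sup>2 + b\<^sup>2 + z\<^sup>2) / c + c) / 2"
  have chart: "horo_chart c (a, b, z) = lvec a b z (t - c) t"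
    by (simp add: horo_chart_def t_def)
  have "sqrt 3 * a + sqrt 3 * b \<le> 3 * c"
    using mult_left_mono[OF p(3), of "sqrt 3"] by (simp add: distrib_left mult.assoc[symmetric])
  moreover have "sqrt 2 * z \<le> 2 * c"
    using mult_left_mono[OF p(5), of "sqrt 2"] by (simp add: mult.assoc[symmetric])
  moreover have "0 \<le> sqrt 3 * a" "0 \<le> sqrt 3 * b"
    using p by simp_all
  ultimately have "sqrt 3 * a \<le> 3 * c" "sqrt 3 * b + sqrt 2 * z \<le> 5 * c"
    by linarith+
  moreover have "(1 / c + c) / 2 \<le> t"
    using assms(1) by (simp add: t_def divide_right_mono)
  moreover have "c * c \<le> 1/3 * (1/3)"
    using assms(1,2) by (intro mult_mono) auto
  then have "3 * c \<le> (1 / c - c) / 2" "5 * c \<le> (1 / c + c) / 2"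
    using assms(1) by (simp_all add: field_simps power2_eq_square)
  ultimately have "\<forall>i\<in>{1..7}. lorentz (lvec a b z (t - c) t) (P0_normal i) \<le> 0"
    unfolding P0_normal_nonpos_iff using p by auto
  then show ?thesis
    using horo_chart_in_horosphere[OF assms(1), of "(a, b, z)"]
    by (simp add: polytope_def horosphere_def chart)
qed

lemma P0_horosphere_section:
  assumes "0 < c" "c \<le> 1/3"
  shows "P0 \<inter> horosphere cusp_pt c = horo_chart c ` tri_prism (sqrt 3 * c) (sqrt 2 * c)"
  using P0_horosphere_in_prism[OF assms(1)] horo_chart_prism_in_P0[OF assms]
    horo_chart_in_horosphere[OF assms(1)]
  by fastforce

lemma P0_cusp_link:
  assumes "0 < c" "c \<le> 1/3"
  shows "is_right_prism_link (horosphere cusp_pt c) (P0 \<inter> horosphere cusp_pt c)"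
  unfolding is_right_prism_link_def
  using assms range_horo_chart horo_chart_isometric P0_horosphere_section
  by (intro exI[of _ "horo_chart c"] exI[of _ "sqrt 3 * c"] exI[of _ "sqrt 2 * c"]) auto

theorem proposition3p1:
  shows "\<exists>e. coxeter_polytope_with_diagram {1..7} D_m e \<and>
     hyp_volume (polytope {1..7} e) < \<infinity> \<and>
     (\<exists>!v. ideal_vertex {1..7} e v) \<and>
     (\<forall>i\<in>{1..7}. \<forall>j\<in>{1..7}.
        hyp_bounded (facet {1..7} e i) \<and> \<not> hyp_bounded (facet {1..7} e j) \<and>
        facet {1..7} e i \<inter> facet {1..7} e j \<noteq> {} \<longrightarrow>
        (\<exists>k::nat. k > 0 \<and> dihedral (e i) (e j) = pi / real (2 * k))) \<and>
     (\<forall>v. ideal_vertex {1..7} e v \<longrightarrow>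
        {i \<in> {1..7}. lorentz v (e i) = 0} = {1, 2, 4, 5, 6} \<and>
        (\<exists>c0>0. \<forall>c. 0 < c \<and> c \<le> c0 \<longrightarrow>
           is_right_prism_link (horosphere v c) (polytope {1..7} e \<inter> horosphere v c)))"
proof (intro exI[of _ P0_normal] conjI)
  show "coxeter_polytope_with_diagram {1..7} D_m P0_normal" by (rule P0_coxeter)
  show "hyp_volume P0 < \<infinity>" by (rule P0_finite_volume)
  show "\<exists>!v. ideal_vertex {1..7} P0_normal v"
    using ideal_vertex_cusp_pt P0_ideal_vertex_unique by blast
  show "\<forall>i\<in>{1..7}. \<forall>j\<in>{1..7}.
      hyp_bounded (facet {1..7} P0_normal i) \<and> \<not> hyp_bounded (facet {1..7} P0_normal j) \<and>
      facet {1..7} P0_normal i \<inter> facet {1..7} P0_normal j \<noteq> {} \<longrightarrow>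
      (\<exists>k::nat. k > 0 \<and> dihedral (P0_normal i) (P0_normal j) = pi / real (2 * k))"
    using P0_dihedral_even by blast
  show "\<forall>v. ideal_vertex {1..7} P0_normal v \<longrightarrow>
      {i \<in> {1..7}. lorentz v (P0_normal i) = 0} = {1, 2, 4, 5, 6} \<and>
      (\<exists>c0>0. \<forall>c. 0 < c \<and> c \<le> c0 \<longrightarrow>
         is_right_prism_link (horosphere v c) (P0 \<inter> horosphere v c))"
  proof (intro allI impI conjI)
    fix v assume "ideal_vertex {1..7} P0_normal v"
    then have "v = cusp_pt" by (rule P0_ideal_vertex_unique)
    then show "{i \<in> {1..7}. lorentz v (P0_normal i) = 0} = {1, 2, 4, 5, 6}"
      using P0_cusp_facets by simp
    show "\<exists>c0>0. \<forall>c. 0 < c \<and> c \<le> c0 \<longrightarrow>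
        is_right_prism_link (horosphere v c) (P0 \<inter> horosphere v c)"
      using P0_cusp_link \<open>v = cusp_pt\<close> by (intro exI[of _ "1/3"]) auto
  qed
qed

end
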